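(* Let $G$ be an ADMG and let $\{x,y\}$, $Z$, $W$ be pairwise disjoint node sets of $G$ (with $x\neq y$ nodes). Then $(Z,W)$ is a valid conditional instrumental set relative to $(x,y)$ in $G$ if and only if all of the following hold: (i) there is no directed path from $x$ to $y$ that contains a node in $W$; (ii) there exists a walk from some node of $Z$ to $x$ that is open given $W$; (iii) there is no walk from a node of $Z$ to $y$ that is open given $W$ and does not end with a segment of the form $x\to\cdots\to y$ (a walk $v_1,\dots,v_r$ with edges $e_1,\dots,e_{r-1}$ ends with such a segment if there is an index $i$ with $v_i=x$ and every edge $e_j$, $j\ge i$, is of the form $v_j\to v_{j+1}$).
   Context: An ADMG $G$ has a finite node set $V$, directed edges $u\to v$ and bidirected edges $u\leftrightarrow v$, such that the subgraph of directed edges has no directed cycle. A walk is a sequence of nodes $v_1,\dots,v_r$ with edges $e_1,\dots,e_{r-1}$, $e_i$ joining $v_i$ and $v_{i+1}$ (nodes may repeat); a path is a walk with distinct nodes. A walk is directed from $v_1$ to $v_r$ if each $e_i$ is $v_i\to v_{i+1}$. $u$ is a parent of $v$ if $u\to v$; $\mathrm{de}_G(v)$ ($\mathrm{an}_G(v)$) is the set of nodes reachable from $v$ by a directed path (from which $v$ is reachable by a directed path), including $v$ itself; for sets take unions. A non-endpoint occurrence $v_i$ ($1<i<r$) on a walk is a collider if both $e_{i-1}$ and $e_i$ have an arrowhead at $v_i$ (each is of the form $\cdot\to v_i$ or $\cdot\leftrightarrow v_i$); otherwise it is a non-collider. A walk is open given $W$ if every collider on it is in $W$ and every non-collider is not in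 $W$. For disjoint sets $A,B,W$, $A\not\perp_G B\mid W$ (d-connected) if some walk from a node of $A$ to a node of $B$ is open given $W$; otherwise $A\perp_G B\mid W$. Let $\mathrm{causal}_G(x,y)=(\mathrm{de}_G(x)\cap\mathrm{an}_G(y))\setminus\{x\}$ and $\mathrm{forb}_G(x,y)=\mathrm{de}_G(\mathrm{causal}_G(x,y))\cup\{x\}$. Let $\tilde G$ be $G$ with all directed edges $x\to c$, $c\in\mathrm{causal}_G(x,y)$, removed. For pairwise disjoint $\{x,y\},Z,W$, $(Z,W)$ is a valid conditional instrumental set relative to $(x,y)$ in $G$ iff (a) $(Z\cup W)\cap\mathrm{forb}_G(x,y)=\emptyset$, (b) $x\not\perp_G Z\mid W$, and (c) $y\perp_{\tilde G} Z\mid W$. *)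

theory Defs
  imports Main
begin

(* An ADMG on node set V: directed edges D (pairs (u,v) meaning u -> v),
   bidirected edges B (a pair (u,v) or (v,u) in B means u <-> v). *)
definition admg :: "'v set \<Rightarrow> ('v \<times> 'v) set \<Rightarrow> ('v \<times> 'v) set \<Rightarrow> bool" where
  "admg V D B \<longleftrightarrow> finite V \<and> D \<subseteq> V \<times> V \<and> B \<subseteq> V \<times> V
     \<and> (\<forall>v. (v, v) \<notin> B) \<and> acyclic D"

(* kind of the i-th edge of a walk, relative to the walk direction:
   Fwd: v_i -> v_(i+1); Bwd: v_i <- v_(i+1); Bid: v_i <-> v_(i+1) *)
datatype step = Fwd | Bwd | Bid

definition is_walk :: "'v set \<Rightarrow> ('v \<times> 'v) set \<Rightarrow> ('v \<times> 'v) set \<Rightarrow> 'v list \<Rightarrow> step list \<Rightarrow> bool" where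
  "is_walk V D B vs ks \<longleftrightarrow> vs \<noteq> [] \<and> set vs \<subseteq> V \<and> length vs = Suc (length ks) \<and>
     (\<forall>i < length ks. case ks ! i of
         Fwd \<Rightarrow> (vs ! i, vs ! Suc i) \<in> D
       | Bwd \<Rightarrow> (vs ! Suc i, vs ! i) \<in> D
       | Bid \<Rightarrow> (vs ! i, vs ! Suc i) \<in> B \<or> (vs ! Suc i, vs ! i) \<in> B)"

(* arrowhead of the edge at its later / earlier endpoint along the walk *)
definition head_right :: "step \<Rightarrow> bool" where
  "head_right k \<longleftrightarrow> k = Fwd \<or> k = Bid"

definition head_left :: "step \<Rightarrow> bool" where
  "head_left k \<longleftrightarrow> k = Bwd \<or> k = Bid"

(* occurrence vs!i (0 < i < length ks) is a collider *)
definition collider :: "step list \<Rightarrow> nat \<Rightarrow> bool" where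
  "collider ks i \<longleftrightarrow> head_right (ks ! (i - 1)) \<and> head_left (ks ! i)"

definition open_walk :: "'v set \<Rightarrow> 'v list \<Rightarrow> step list \<Rightarrow> bool" where
  "open_walk W vs ks \<longleftrightarrow> (\<forall>i. 0 < i \<and> i < length ks \<longrightarrow>
      (collider ks i \<longrightarrow> vs ! i \<in> W) \<and> (\<not> collider ks i \<longrightarrow> vs ! i \<notin> W))"

definition directed_walk :: "step list \<Rightarrow> bool" where
  "directed_walk ks \<longleftrightarrow> (\<forall>i < length ks. ks ! i = Fwd)"

definition dir_path :: "'v set \<Rightarrow> ('v \<times> 'v) set \<Rightarrow> ('v \<times> 'v) set \<Rightarrow> 'v list \<Rightarrow> step list \<Rightarrow> bool" where
  "dir_path V D B vs ks \<longleftrightarrow> is_walk V D B vs ks \<and> distinct vs \<and> directed_walk ks"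

definition de :: "'v set \<Rightarrow> ('v \<times> 'v) set \<Rightarrow> ('v \<times> 'v) set \<Rightarrow> 'v set \<Rightarrow> 'v set" where
  "de V D B S = {u. \<exists>vs ks. dir_path V D B vs ks \<and> hd vs \<in> S \<and> last vs = u}"

definition an :: "'v set \<Rightarrow> ('v \<times> 'v) set \<Rightarrow> ('v \<times> 'v) set \<Rightarrow> 'v set \<Rightarrow> 'v set" where
  "an V D B S = {u. \<exists>vs ks. dir_path V D B vs ks \<and> hd vs = u \<and> last vs \<in> S}"

definition d_connected :: "'v set \<Rightarrow> ('v \<times> 'v) set \<Rightarrow> ('v \<times> 'v) set \<Rightarrow> 'v set \<Rightarrow> 'v set \<Rightarrow> 'v set \<Rightarrow> bool" where
  "d_connected V D B A C W \<longleftrightarrow>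
     (\<exists>vs ks. is_walk V D B vs ks \<and> hd vs \<in> A \<and> last vs \<in> C \<and> open_walk W vs ks)"

definition causal :: "'v set \<Rightarrow> ('v \<times> 'v) set \<Rightarrow> ('v \<times> 'v) set \<Rightarrow> 'v \<Rightarrow> 'v \<Rightarrow> 'v set" where
  "causal V D B x y = (de V D B {x} \<inter> an V D B {y}) - {x}"

definition forb :: "'v set \<Rightarrow> ('v \<times> 'v) set \<Rightarrow> ('v \<times> 'v) set \<Rightarrow> 'v \<Rightarrow> 'v \<Rightarrow> 'v set" where
  "forb V D B x y = de V D B (causal V D B x y) \<union> {x}"

definition D_tilde :: "'v set \<Rightarrow> ('v \<times> 'v) set \<Rightarrow> ('v \<times> 'v) set \<Rightarrow> 'v \<Rightarrow> 'v \<Rightarrow> ('v \<times> 'v) set" where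
  "D_tilde V D B x y = D - {(x, c) | c. c \<in> causal V D B x y}"

definition valid_cis :: "'v set \<Rightarrow> ('v \<times> 'v) set \<Rightarrow> ('v \<times> 'v) set \<Rightarrow> 'v \<Rightarrow> 'v \<Rightarrow> 'v set \<Rightarrow> 'v set \<Rightarrow> bool" where
  "valid_cis V D B x y Z W \<longleftrightarrow>
     (Z \<union> W) \<inter> forb V D B x y = {} \<and>
     d_connected V D B {x} Z W \<and>
     \<not> d_connected V (D_tilde V D B x y) B {y} Z W"

definition ends_directed_from :: "'v \<Rightarrow> 'v list \<Rightarrow> step list \<Rightarrow> bool" where
  "ends_directed_from x vs ks \<longleftrightarrow>
     (\<exists>i < length vs. vs ! i = x \<and> (\<forall>j. i \<le> j \<and> j < length ks \<longrightarrow> ks ! j = Fwd))"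

end

theory Submission
  imports Defs
begin

text \<open>
  Let \<open>C\<close> be the set of descendants of causal nodes, so that \<open>forb = C \<union> {x}\<close>. As \<open>C\<close> is
  closed under children, an open walk that enters \<open>C\<close> along a forward edge keeps moving forward
  as long as \<open>C\<close> avoids \<open>W\<close>, since every node of \<open>C\<close> is then a non-collider; dually, a backward
  edge into \<open>C\<close> forces all earlier edges to point backward. Hence, if \<open>C\<close> avoids \<open>Z\<close> and \<open>W\<close>, an
  open walk from \<open>Z\<close> to \<open>y\<close> uses an edge \<open>x \<rightarrow> c\<close> with \<open>c\<close> causal only as the first edge of a
  final segment \<open>x \<rightarrow> \<dots> \<rightarrow> y\<close>, and all other such walks only use edges of \<open>D_tilde\<close>: this
  turns (c) into (iii). Conversely, by (iii) an open walk from \<open>Z\<close> to \<open>y\<close> along \<open>D_tilde\<close> would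
  end with \<open>x \<rightarrow> \<dots> \<rightarrow> y\<close>, whose first edge was removed, which gives (c). Conditions (i)-(iii)
  also force \<open>C\<close> to avoid \<open>W\<close> and \<open>Z\<close>: for a \<open>D\<^sup>+\<close>-minimal \<open>w \<in> C \<inter> W\<close> below a causal
  \<open>c\<close>, the open walk \<open>Z \<leadsto> x \<rightarrow> \<dots> \<rightarrow> c \<rightarrow> \<dots> \<rightarrow> w \<leftarrow> \<dots> \<leftarrow> c \<rightarrow> \<dots> \<rightarrow> y\<close> has a backward edge after \<open>c\<close> but never
  returns to \<open>x\<close>; and for \<open>z \<in> C \<inter> Z\<close> the open walk \<open>z \<leftarrow> \<dots> \<leftarrow> c \<rightarrow> \<dots> \<rightarrow> y\<close> misses \<open>x\<close>.
\<close>

section \<open>Walks\<close>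

definition step_edge :: "('v \<times> 'v) set \<Rightarrow> ('v \<times> 'v) set \<Rightarrow> step \<Rightarrow> 'v \<Rightarrow> 'v \<Rightarrow> bool" where
  "step_edge D B k u v \<longleftrightarrow>
     (case k of Fwd \<Rightarrow> (u, v) \<in> D | Bwd \<Rightarrow> (v, u) \<in> D | Bid \<Rightarrow> (u, v) \<in> B \<or> (v, u) \<in> B)"

definition collides :: "step \<Rightarrow> step \<Rightarrow> bool" where
  "collides k k' \<longleftrightarrow> head_right k \<and> head_left k'"

fun flip :: "step \<Rightarrow> step" where
  "flip Fwd = Bwd" | "flip Bwd = Fwd" | "flip Bid = Bid"

lemma collides_simps [simp]:
  "\<not> collides k Fwd" "\<not> collides Bwd k" "collides Fwd Bwd"
  by (auto simp: collides_def head_right_def head_left_def)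

lemma step_edge_flip: "step_edge D B (flip k) u v \<longleftrightarrow> step_edge D B k v u"
  by (cases k) (auto simp: step_edge_def)

lemma is_walk_iff_step_edges:
  "is_walk V D B vs ks \<longleftrightarrow> vs \<noteq> [] \<and> set vs \<subseteq> V \<and> length vs = Suc (length ks) \<and>
     (\<forall>i < length ks. step_edge D B (ks ! i) (vs ! i) (vs ! Suc i))"
  by (simp add: is_walk_def step_edge_def)

lemma is_walk_step_edge:
  "is_walk V D B vs ks \<Longrightarrow> i < length ks \<Longrightarrow> step_edge D B (ks ! i) (vs ! i) (vs ! Suc i)"
  by (simp add: is_walk_iff_step_edges)

lemma is_walk_length: "is_walk V D B vs ks \<Longrightarrow> length vs = Suc (length ks)"
  by (simp add: is_walk_def)

lemma not_is_walk_Nil [simp]: "\<not> is_walk V D B [] ks"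
  by (simp add: is_walk_def)

lemma is_walk_not_Nil: "is_walk V D B vs ks \<Longrightarrow> vs \<noteq> []"
  by auto

lemma is_walk_hd_last: "is_walk V D B vs ks \<Longrightarrow> hd vs = vs ! 0 \<and> last vs = vs ! length ks"
  by (auto simp: is_walk_def hd_conv_nth last_conv_nth)

lemma is_walk_Nil: "is_walk V D B vs [] \<longleftrightarrow> (\<exists>v \<in> V. vs = [v])"
  by (cases vs) (auto simp: is_walk_def)

lemma is_walk_Cons:
  "is_walk V D B (v # vs) (k # ks) \<longleftrightarrow> v \<in> V \<and> step_edge D B k v (hd vs) \<and> is_walk V D B vs ks"
  by (cases vs) (auto simp: is_walk_iff_step_edges All_less_Suc2)

lemma open_walk_iff:
  "open_walk W vs ks \<longleftrightarrow> (\<forall>i. 0 < i \<and> i < length ks \<longrightarrow> (collider ks i \<longleftrightarrow> vs ! i \<in> W))"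
  by (auto simp: open_walk_def)

lemma collider_Cons:
  "j < length ks \<Longrightarrow>
    collider (k # ks) (Suc j) \<longleftrightarrow> (if j = 0 then collides k (hd ks) else collider ks j)"
  by (cases ks) (auto simp: collider_def collides_def nth_Cons')

lemma open_walk_Cons:
  "open_walk W (v # vs) (k # ks) \<longleftrightarrow>
     open_walk W vs ks \<and> (ks \<noteq> [] \<longrightarrow> (collides k (hd ks) \<longleftrightarrow> vs ! 0 \<in> W))"
proof -
  have split_first: "(\<forall>j < n. P j) \<longleftrightarrow> (0 < n \<longrightarrow> P 0) \<and> (\<forall>j. 0 < j \<and> j < n \<longrightarrow> P j)" for n :: nat and P
    by (metis gr0I)
  have "open_walk W (v # vs) (k # ks) \<longleftrightarrow> (\<forall>j < length ks. collider (k # ks) (Suc j) \<longleftrightarrow> vs ! j \<in> W)"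
    unfolding open_walk_iff by (auto simp: gr0_conv_Suc)
  also have "\<dots> \<longleftrightarrow> (ks \<noteq> [] \<longrightarrow> (collides k (hd ks) \<longleftrightarrow> vs ! 0 \<in> W)) \<and> open_walk W vs ks"
    unfolding split_first[where n = "length ks"] open_walk_iff by (simp add: collider_Cons)
  finally show ?thesis by blast
qed

lemma last_append_tl: "vs \<noteq> [] \<Longrightarrow> vs' \<noteq> [] \<Longrightarrow> last vs = hd vs' \<Longrightarrow> last (vs @ tl vs') = last vs'"
  by (cases vs') auto

lemma set_append_tl_subset: "set (vs @ tl vs') \<subseteq> set vs \<union> set vs'"
  by (cases vs') auto

lemma is_walk_append_hd_last:
  "is_walk V D B vs ks \<Longrightarrow> is_walk V D B vs' ks' \<Longrightarrow> last vs = hd vs' \<Longrightarrow>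
     hd (vs @ tl vs') = hd vs \<and> last (vs @ tl vs') = last vs'"
  by (simp add: is_walk_not_Nil last_append_tl)

lemma is_walk_append:
  "is_walk V D B vs ks \<Longrightarrow> is_walk V D B vs' ks' \<Longrightarrow> last vs = hd vs' \<Longrightarrow>
     is_walk V D B (vs @ tl vs') (ks @ ks')"
proof (induction ks arbitrary: vs)
  case Nil
  then show ?case by (cases vs') (auto simp: is_walk_Nil)
next
  case (Cons k ks)
  then obtain v vs1 where "vs = v # vs1"
    by (cases vs) (auto simp: is_walk_def)
  with Cons show ?case by (auto simp: is_walk_Cons is_walk_not_Nil)
qed

lemma open_walk_append:
  assumes "is_walk V D B vs ks" "is_walk V D B vs' ks'" "last vs = hd vs'"
    and "open_walk W vs ks" "open_walk W vs' ks'"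
    and "ks \<noteq> [] \<Longrightarrow> ks' \<noteq> [] \<Longrightarrow> collides (last ks) (hd ks') \<longleftrightarrow> hd vs' \<in> W"
  shows "open_walk W (vs @ tl vs') (ks @ ks')"
  using assms
proof (induction ks arbitrary: vs)
  case Nil
  then show ?case by (cases vs') (auto simp: is_walk_Nil)
next
  case (Cons k ks)
  then obtain v vs1 where vs: "vs = v # vs1"
    by (cases vs) (auto simp: is_walk_def)
  with Cons.prems have walk1: "is_walk V D B vs1 ks" and open1: "open_walk W (v # vs1) (k # ks)"
    by (auto simp: is_walk_Cons)
  have IH: "open_walk W (vs1 @ tl vs') (ks @ ks')"
  proof (rule Cons.IH[OF walk1 Cons.prems(2)])
    show "last vs1 = hd vs'" using Cons.prems(3) vs is_walk_not_Nil[OF walk1] by simp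
    show "open_walk W vs1 ks" using open1 by (simp add: open_walk_Cons)
    show "collides (last ks) (hd ks') \<longleftrightarrow> hd vs' \<in> W" if "ks \<noteq> []" "ks' \<noteq> []"
      using Cons.prems(6) that by simp
  qed fact
  show ?case
  proof (cases ks)
    case Nil
    with walk1 obtain u where "vs1 = [u]" by (auto simp: is_walk_Nil)
    with Nil Cons.prems IH vs show ?thesis
      by (cases vs') (auto simp: open_walk_Cons)
  next
    case (Cons _ _)
    with IH open1 vs is_walk_not_Nil[OF walk1] show ?thesis
      by (auto simp: open_walk_Cons nth_append)
  qed
qed

lemma head_right_flip: "head_right (flip k) \<longleftrightarrow> head_left k"
  and head_left_flip: "head_left (flip k) \<longleftrightarrow> head_right k"
  by (cases k; simp add: head_right_def head_left_def)+

lemma is_walk_rev: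
  assumes walk: "is_walk V D B vs ks"
  shows "is_walk V D B (rev vs) (rev (map flip ks))"
proof -
  have "step_edge D B (rev (map flip ks) ! i) (rev vs ! i) (rev vs ! Suc i)"
    if "i < length ks" for i
  proof -
    define j where "j = length ks - Suc i"
    have "j < length ks" "length ks - i = Suc j" using that by (auto simp: j_def)
    then show ?thesis using is_walk_step_edge[OF walk, of j] is_walk_length[OF walk] that
      by (simp add: rev_nth step_edge_flip j_def)
  qed
  then show ?thesis using walk by (auto simp: is_walk_iff_step_edges)
qed

lemma open_walk_rev:
  assumes walk: "is_walk V D B vs ks" and "open_walk W vs ks"
  shows "open_walk W (rev vs) (rev (map flip ks))"
  unfolding open_walk_iff
proof (intro allI impI)
  fix i assume i: "0 < i \<and> i < length (rev (map flip ks))"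
  define j where "j = length ks - i"
  have j: "0 < j" "j < length ks" "length ks - Suc i = j - 1" using i by (auto simp: j_def)
  have "collider (rev (map flip ks)) i \<longleftrightarrow> collider ks j"
    using i j by (auto simp: collider_def rev_nth head_right_flip head_left_flip j_def)
  moreover have "rev vs ! i = vs ! j"
    using i is_walk_length[OF walk] by (simp add: rev_nth j_def)
  ultimately show "collider (rev (map flip ks)) i \<longleftrightarrow> rev vs ! i \<in> W"
    using \<open>open_walk W vs ks\<close> j by (simp add: open_walk_iff)
qed

lemma d_connected_sym: "d_connected V D B A C W \<longleftrightarrow> d_connected V D B C A W"
proof -
  have "d_connected V D B C A W" if "d_connected V D B A C W" for A C
  proof -
    from that obtain vs ks where "is_walk V D B vs ks" "hd vs \<in> A" "last vs \<in> C" "open_walk W vs ks"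
      by (auto simp: d_connected_def)
    then show ?thesis unfolding d_connected_def
      by (intro exI[of _ "rev vs"] exI[of _ "rev (map flip ks)"])
        (auto simp: is_walk_rev open_walk_rev hd_rev last_rev is_walk_not_Nil)
  qed
  then show ?thesis by blast
qed

lemma is_walk_mono: "is_walk V D B vs ks \<Longrightarrow> D \<subseteq> D' \<Longrightarrow> is_walk V D' B vs ks"
  by (auto simp: is_walk_iff_step_edges step_edge_def split: step.splits)

lemma is_walk_Diff:
  assumes "is_walk V D B vs ks"
    and "\<And>i. i < length ks \<Longrightarrow> ks ! i = Fwd \<Longrightarrow> (vs ! i, vs ! Suc i) \<notin> R"
    and "\<And>i. i < length ks \<Longrightarrow> ks ! i = Bwd \<Longrightarrow> (vs ! Suc i, vs ! i) \<notin> R"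
  shows "is_walk V (D - R) B vs ks"
  using assms by (auto simp: is_walk_iff_step_edges step_edge_def split: step.splits)

section \<open>Open walks meeting a set closed under children\<close>

lemma open_walk_Fwd_propagates:
  assumes walk: "is_walk V D B vs ks" and "open_walk W vs ks"
    and closed: "D `` C \<subseteq> C" and "C \<inter> W = {}"
    and "ks ! j = Fwd" "vs ! Suc j \<in> C" "j \<le> l" "l < length ks"
  shows "ks ! l = Fwd \<and> vs ! Suc l \<in> C"
  using \<open>j \<le> l\<close> \<open>l < length ks\<close>
proof (induction l rule: dec_induct)
  case base
  then show ?case using assms by simp
next
  case (step n)
  then have IH: "ks ! n = Fwd" "vs ! Suc n \<in> C" by simp_all
  have "\<not> collider ks (Suc n)"
    using \<open>open_walk W vs ks\<close> \<open>C \<inter> W = {}\<close> IH(2) step.prems by (auto simp: open_walk_iff)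
  with IH(1) have Fwd: "ks ! Suc n = Fwd"
    by (cases "ks ! Suc n") (auto simp: collider_def head_right_def head_left_def)
  with is_walk_step_edge[OF walk, of "Suc n"] step.prems have "(vs ! Suc n, vs ! Suc (Suc n)) \<in> D"
    by (simp add: step_edge_def)
  with Fwd IH(2) closed show ?case by blast
qed

lemma open_walk_Bwd_propagates:
  assumes walk: "is_walk V D B vs ks" and "open_walk W vs ks"
    and closed: "D `` C \<subseteq> C" and "C \<inter> W = {}"
    and "ks ! j = Bwd" "vs ! j \<in> C" "l \<le> j" "j < length ks"
  shows "ks ! l = Bwd \<and> vs ! l \<in> C"
  using \<open>l \<le> j\<close>
proof (induction l rule: inc_induct)
  case base
  then show ?case using assms by simp
next
  case (step n)
  then have IH: "ks ! Suc n = Bwd" "vs ! Suc n \<in> C" by simp_all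
  have "\<not> collider ks (Suc n)"
    using \<open>open_walk W vs ks\<close> \<open>C \<inter> W = {}\<close> IH(2) step.hyps \<open>j < length ks\<close>
    by (auto simp: open_walk_iff)
  with IH(1) have Bwd: "ks ! n = Bwd"
    by (cases "ks ! n") (auto simp: collider_def head_right_def head_left_def)
  with is_walk_step_edge[OF walk, of n] step.hyps \<open>j < length ks\<close> have "(vs ! Suc n, vs ! n) \<in> D"
    by (simp add: step_edge_def)
  with Bwd IH(2) closed show ?case by blast
qed

lemma ends_directed_from_if_Fwd_into_closed:
  assumes walk: "is_walk V D B vs ks" and "open_walk W vs ks"
    and closed: "D `` C \<subseteq> C" and "C \<inter> W = {}"
    and "i < length ks" "ks ! i = Fwd" "vs ! i = x" "vs ! Suc i \<in> C"
  shows "ends_directed_from x vs ks"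
proof -
  have "ks ! l = Fwd" if "i \<le> l" "l < length ks" for l
    using open_walk_Fwd_propagates[OF walk \<open>open_walk W vs ks\<close> closed] assms(4-8) that by blast
  then show ?thesis
    using assms(5,7) is_walk_length[OF walk] unfolding ends_directed_from_def
    by (auto intro!: exI[of _ i])
qed

section \<open>Directed walks\<close>

lemma rtrancl_in_V:
  assumes "D \<subseteq> V \<times> V" "(a, b) \<in> D\<^sup>*" "a \<in> V" shows "b \<in> V"
  using assms(2,1,3) by (induction rule: rtrancl_induct) auto

lemma directed_walk_iff: "directed_walk ks \<longleftrightarrow> (\<forall>k \<in> set ks. k = Fwd)"
  by (simp add: directed_walk_def all_set_conv_all_nth)

lemma directed_walk_append: "directed_walk (ks @ ks') \<longleftrightarrow> directed_walk ks \<and> directed_walk ks'"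
  by (auto simp: directed_walk_iff)

lemma directed_walk_hd_last: "directed_walk ks \<Longrightarrow> ks \<noteq> [] \<Longrightarrow> hd ks = Fwd \<and> last ks = Fwd"
  by (simp add: directed_walk_iff)

lemma Fwd_segment_rtrancl:
  assumes walk: "is_walk V D B vs ks" and Fwd: "\<And>l. i \<le> l \<Longrightarrow> l < j \<Longrightarrow> ks ! l = Fwd"
    and "i \<le> j" "j \<le> length ks"
  shows "(vs ! i, vs ! j) \<in> D\<^sup>*"
  using \<open>i \<le> j\<close> \<open>j \<le> length ks\<close>
proof (induction j rule: dec_induct)
  case base
  then show ?case by simp
next
  case (step n)
  with is_walk_step_edge[OF walk, of n] Fwd[of n] have "(vs ! n, vs ! Suc n) \<in> D"
    by (simp add: step_edge_def)
  with step show ?case by (simp add: rtrancl_into_rtrancl)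
qed

lemma directed_walk_trancl:
  assumes walk: "is_walk V D B vs ks" and "directed_walk ks" "i < j" "j \<le> length ks"
  shows "(vs ! i, vs ! j) \<in> D\<^sup>+"
proof -
  have "(vs ! i, vs ! Suc i) \<in> D"
    using is_walk_step_edge[OF walk, of i] assms by (simp add: directed_walk_def step_edge_def)
  moreover have "(vs ! Suc i, vs ! j) \<in> D\<^sup>*"
    using Fwd_segment_rtrancl[OF walk] assms by (simp add: directed_walk_def)
  ultimately show ?thesis by simp
qed

lemma directed_walk_interior:
  assumes walk: "is_walk V D B vs ks" and "directed_walk ks" "0 < i" "i < length ks"
  shows "(hd vs, vs ! i) \<in> D\<^sup>+ \<and> (vs ! i, last vs) \<in> D\<^sup>+"
  using directed_walk_trancl[OF assms(1,2)] assms is_walk_hd_last[OF walk] by simp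

lemma directed_walk_set:
  assumes walk: "is_walk V D B vs ks" and "directed_walk ks" "u \<in> set vs"
  shows "(hd vs, u) \<in> D\<^sup>* \<and> (u, last vs) \<in> D\<^sup>*"
proof -
  obtain i where "i < length vs" "u = vs ! i" using \<open>u \<in> set vs\<close> by (auto simp: in_set_conv_nth)
  then show ?thesis
    using Fwd_segment_rtrancl[OF walk, of 0 i] Fwd_segment_rtrancl[OF walk, of i "length ks"]
      assms is_walk_length[OF walk] is_walk_hd_last[OF walk]
    by (auto simp: directed_walk_def)
qed

lemma directed_walk_distinct:
  assumes walk: "is_walk V D B vs ks" and "directed_walk ks" "acyclic D"
  shows "distinct vs"
  unfolding distinct_conv_nth
proof (intro allI impI)
  fix i j assume "i < length vs" "j < length vs" "i \<noteq> j"
  then show "vs ! i \<noteq> vs ! j"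
    using directed_walk_trancl[OF walk \<open>directed_walk ks\<close>, of i j]
      directed_walk_trancl[OF walk \<open>directed_walk ks\<close>, of j i]
      \<open>acyclic D\<close> is_walk_length[OF walk]
    by (cases "i < j") (auto simp: acyclic_def)
qed

lemma directed_walk_open:
  "directed_walk ks \<Longrightarrow> (\<And>i. 0 < i \<Longrightarrow> i < length ks \<Longrightarrow> vs ! i \<notin> W) \<Longrightarrow> open_walk W vs ks"
  by (auto simp: open_walk_def directed_walk_def collider_def head_left_def)

lemma rtrancl_directed_walkE:
  assumes "D \<subseteq> V \<times> V" "(a, b) \<in> D\<^sup>*" "b \<in> V"
  obtains vs ks where "is_walk V D B vs ks" "directed_walk ks" "hd vs = a" "last vs = b"
proof -
  from \<open>(a, b) \<in> D\<^sup>*\<close>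
  have "\<exists>vs ks. is_walk V D B vs ks \<and> directed_walk ks \<and> hd vs = a \<and> last vs = b"
  proof (induction rule: converse_rtrancl_induct)
    case base
    show ?case using \<open>b \<in> V\<close>
      by (intro exI[of _ "[b]"] exI[of _ "[]"]) (simp add: is_walk_Nil directed_walk_def)
  next
    case (step a a')
    then obtain vs ks where "is_walk V D B vs ks" "directed_walk ks" "hd vs = a'" "last vs = b"
      by blast
    with step.hyps \<open>D \<subseteq> V \<times> V\<close> show ?case
      by (intro exI[of _ "a # vs"] exI[of _ "Fwd # ks"])
        (auto simp: is_walk_Cons step_edge_def directed_walk_iff)
  qed
  with that show ?thesis by blast
qed

lemma open_directed_walkE:
  assumes "D \<subseteq> V \<times> V" "(a, b) \<in> D\<^sup>*" "b \<in> V"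
    and "\<And>u. (a, u) \<in> D\<^sup>+ \<Longrightarrow> (u, b) \<in> D\<^sup>+ \<Longrightarrow> u \<notin> W"
  obtains vs ks where "is_walk V D B vs ks" "directed_walk ks" "hd vs = a" "last vs = b"
    "open_walk W vs ks"
proof -
  obtain vs ks where walk: "is_walk V D B vs ks" "directed_walk ks" "hd vs = a" "last vs = b"
    using rtrancl_directed_walkE[OF assms(1-3)] .
  moreover have "open_walk W vs ks"
    using directed_walk_open[OF walk(2)] directed_walk_interior[OF walk(1,2)] walk(3,4) assms(4)
    by blast
  ultimately show ?thesis using that by blast
qed

lemma fork_walk:
  assumes walk1: "is_walk V D B vs1 ks1" "directed_walk ks1" "open_walk W vs1 ks1"
    and walk2: "is_walk V D B vs2 ks2" "open_walk W vs2 ks2"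
    and "hd vs1 = hd vs2" "hd vs1 \<notin> W"
  shows "is_walk V D B (rev vs1 @ tl vs2) (rev (map flip ks1) @ ks2)"
    and "open_walk W (rev vs1 @ tl vs2) (rev (map flip ks1) @ ks2)"
proof -
  have rev1: "is_walk V D B (rev vs1) (rev (map flip ks1))"
    "open_walk W (rev vs1) (rev (map flip ks1))" "last (rev vs1) = hd vs2"
    using walk1 is_walk_rev open_walk_rev \<open>hd vs1 = hd vs2\<close> by (auto simp: last_rev)
  have "last (rev (map flip ks1)) = Bwd" if "ks1 \<noteq> []"
    using that directed_walk_hd_last[OF walk1(2)] by (simp add: last_rev hd_map)
  then show "is_walk V D B (rev vs1 @ tl vs2) (rev (map flip ks1) @ ks2)"
    and "open_walk W (rev vs1 @ tl vs2) (rev (map flip ks1) @ ks2)"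
    using is_walk_append[OF rev1(1) walk2(1) rev1(3)]
      open_walk_append[OF rev1(1) walk2(1) rev1(3) rev1(2) walk2(2)] \<open>hd vs1 = hd vs2\<close> \<open>hd vs1 \<notin> W\<close>
    by auto
qed

text \<open>The walk \<open>c \<rightarrow> \<dots> \<rightarrow> w \<leftarrow> \<dots> \<leftarrow> c \<rightarrow> \<dots> \<rightarrow> y\<close>, whose only collider is \<open>w\<close>.\<close>

lemma detour_walkE:
  assumes D_sub: "D \<subseteq> V \<times> V" and "c \<in> V" "(c, w) \<in> D\<^sup>*" "(c, y) \<in> D\<^sup>*" "w \<in> W" "c \<notin> W"
    and clear_w: "\<And>u. (c, u) \<in> D\<^sup>+ \<Longrightarrow> (u, w) \<in> D\<^sup>+ \<Longrightarrow> u \<notin> W"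
    and clear_y: "\<And>u. (c, u) \<in> D\<^sup>+ \<Longrightarrow> (u, y) \<in> D\<^sup>+ \<Longrightarrow> u \<notin> W"
  obtains vs ks where "is_walk V D B vs ks" "open_walk W vs ks" "hd vs = c" "last vs = y"
    "hd ks = Fwd" "Bwd \<in> set ks" "\<forall>u \<in> set vs. (c, u) \<in> D\<^sup>*"
proof -
  have "w \<in> V" "y \<in> V" using rtrancl_in_V[OF D_sub] assms(2-4) by blast+
  obtain vs1 ks1 where P1: "is_walk V D B vs1 ks1" "directed_walk ks1" "hd vs1 = c" "last vs1 = w"
      "open_walk W vs1 ks1"
    using open_directed_walkE[OF D_sub \<open>(c, w) \<in> D\<^sup>*\<close> \<open>w \<in> V\<close> clear_w] .
  obtain vs2 ks2 where P2: "is_walk V D B vs2 ks2" "directed_walk ks2" "hd vs2 = c" "last vs2 = y"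
      "open_walk W vs2 ks2"
    using open_directed_walkE[OF D_sub \<open>(c, y) \<in> D\<^sup>*\<close> \<open>y \<in> V\<close> clear_y] .
  let ?vs = "rev vs1 @ tl vs2" and ?ks = "rev (map flip ks1) @ ks2"
  have fork: "is_walk V D B ?vs ?ks" "open_walk W ?vs ?ks"
    using fork_walk[OF P1(1,2,5) P2(1,5)] P1(3) P2(3) \<open>c \<notin> W\<close> by simp_all
  have "ks1 \<noteq> []"
    using P1 \<open>w \<in> W\<close> \<open>c \<notin> W\<close> is_walk_hd_last[OF P1(1)] by (auto simp: is_walk_Nil)
  then have ks1: "hd ks1 = Fwd" "last ks1 = Fwd" and "hd ?ks = Bwd"
    using directed_walk_hd_last[OF P1(2)] by (simp_all add: hd_rev last_map)
  have fork_ends: "hd ?vs = w" "last ?vs = y"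
    using is_walk_append_hd_last[OF is_walk_rev[OF P1(1)] P2(1)] P1(3,4) P2(3,4)
      is_walk_not_Nil[OF P1(1)]
    by (simp_all add: hd_rev last_rev)
  show ?thesis
  proof
    show "is_walk V D B (vs1 @ tl ?vs) (ks1 @ ?ks)"
      using is_walk_append[OF P1(1) fork(1)] P1(4) fork_ends by simp
    show "open_walk W (vs1 @ tl ?vs) (ks1 @ ?ks)"
      using open_walk_append[OF P1(1) fork(1) _ P1(5) fork(2)] P1(4) fork_ends ks1 \<open>hd ?ks = Bwd\<close>
        \<open>w \<in> W\<close>
      by simp
    show "hd (vs1 @ tl ?vs) = c" "last (vs1 @ tl ?vs) = y"
      using is_walk_append_hd_last[OF P1(1) fork(1)] P1(3,4) fork_ends by simp_all
    show "hd (ks1 @ ?ks) = Fwd" using ks1 \<open>ks1 \<noteq> []\<close> by simp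
    have "?ks \<noteq> []" using \<open>ks1 \<noteq> []\<close> by simp
    then show "Bwd \<in> set (ks1 @ ?ks)" using hd_in_set[of ?ks] \<open>hd ?ks = Bwd\<close> by simp
    have "set (vs1 @ tl ?vs) \<subseteq> set vs1 \<union> set vs2"
      using set_append_tl_subset[of vs1 ?vs] set_append_tl_subset[of "rev vs1" vs2] by auto
    moreover have "(c, u) \<in> D\<^sup>*" if "u \<in> set vs1 \<union> set vs2" for u
      using that directed_walk_set[OF P1(1,2), of u] directed_walk_set[OF P2(1,2), of u] P1(3) P2(3)
      by auto
    ultimately show "\<forall>u \<in> set (vs1 @ tl ?vs). (c, u) \<in> D\<^sup>*" by blast
  qed
qed

section \<open>Directed paths, descendants and ancestors\<close>

lemma dir_path_through_iff:
  assumes "admg V D B"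
  shows "(\<exists>vs ks. dir_path V D B vs ks \<and> hd vs = a \<and> last vs = b \<and> set vs \<inter> S \<noteq> {}) \<longleftrightarrow>
    a \<in> V \<and> (\<exists>s \<in> S. (a, s) \<in> D\<^sup>* \<and> (s, b) \<in> D\<^sup>*)"
proof
  assume "\<exists>vs ks. dir_path V D B vs ks \<and> hd vs = a \<and> last vs = b \<and> set vs \<inter> S \<noteq> {}"
  then obtain vs ks s where "is_walk V D B vs ks" "directed_walk ks" "hd vs = a" "last vs = b"
    "s \<in> set vs" "s \<in> S"
    by (auto simp: dir_path_def)
  then show "a \<in> V \<and> (\<exists>s \<in> S. (a, s) \<in> D\<^sup>* \<and> (s, b) \<in> D\<^sup>*)"
    using directed_walk_set[of V D B vs ks s] by (auto simp: is_walk_def)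
next
  assume "a \<in> V \<and> (\<exists>s \<in> S. (a, s) \<in> D\<^sup>* \<and> (s, b) \<in> D\<^sup>*)"
  then obtain s where "a \<in> V" "s \<in> S" and as: "(a, s) \<in> D\<^sup>*" and sb: "(s, b) \<in> D\<^sup>*" by blast
  have D_sub: "D \<subseteq> V \<times> V" and "acyclic D" using assms by (auto simp: admg_def)
  have "s \<in> V" "b \<in> V" using rtrancl_in_V[OF D_sub] as sb \<open>a \<in> V\<close> by blast+
  obtain vs ks where p: "is_walk V D B vs ks" "directed_walk ks" "hd vs = a" "last vs = s"
    using rtrancl_directed_walkE[OF D_sub as \<open>s \<in> V\<close>] .
  obtain vs' ks' where p': "is_walk V D B vs' ks'" "directed_walk ks'" "hd vs' = s" "last vs' = b"
    using rtrancl_directed_walkE[OF D_sub sb \<open>b \<in> V\<close>] .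
  have walk: "is_walk V D B (vs @ tl vs') (ks @ ks')" and dir: "directed_walk (ks @ ks')"
    using is_walk_append[OF p(1) p'(1)] p p' by (simp_all add: directed_walk_append)
  moreover have "distinct (vs @ tl vs')" using directed_walk_distinct[OF walk dir \<open>acyclic D\<close>] .
  moreover have "hd (vs @ tl vs') = a" "last (vs @ tl vs') = b" "s \<in> set (vs @ tl vs')"
    using p p' by (auto simp: is_walk_not_Nil last_append_tl)
  ultimately show "\<exists>vs ks. dir_path V D B vs ks \<and> hd vs = a \<and> last vs = b \<and> set vs \<inter> S \<noteq> {}"
    using \<open>s \<in> S\<close> unfolding dir_path_def by blast
qed

lemma dir_path_iff_rtrancl:
  assumes "admg V D B"
  shows "(\<exists>vs ks. dir_path V D B vs ks \<and> hd vs = a \<and> last vs = b) \<longleftrightarrow> a \<in> V \<and> (a, b) \<in> D\<^sup>*"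
proof -
  have "hd vs \<in> set vs" if "dir_path V D B vs ks" for vs ks
    using that hd_in_set[OF is_walk_not_Nil] unfolding dir_path_def by blast
  then show ?thesis using dir_path_through_iff[OF assms, of a b "{a}"] by auto
qed

lemma de_iff:
  assumes "admg V D B"
  shows "u \<in> de V D B S \<longleftrightarrow> (\<exists>s \<in> S. s \<in> V \<and> (s, u) \<in> D\<^sup>*)"
proof -
  have "u \<in> de V D B S \<longleftrightarrow> (\<exists>s \<in> S. \<exists>vs ks. dir_path V D B vs ks \<and> hd vs = s \<and> last vs = u)"
    by (auto simp: de_def)
  then show ?thesis unfolding dir_path_iff_rtrancl[OF assms] by blast
qed

lemma an_iff:
  assumes "admg V D B"
  shows "u \<in> an V D B S \<longleftrightarrow> u \<in> V \<and> (\<exists>s \<in> S. (u, s) \<in> D\<^sup>*)"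
proof -
  have "u \<in> an V D B S \<longleftrightarrow> (\<exists>s \<in> S. \<exists>vs ks. dir_path V D B vs ks \<and> hd vs = u \<and> last vs = s)"
    by (auto simp: an_def)
  then show ?thesis unfolding dir_path_iff_rtrancl[OF assms] by blast
qed

section \<open>Conditional instrumental sets\<close>

lemma ends_directed_from_mem: "ends_directed_from x vs ks \<Longrightarrow> x \<in> set vs"
  by (auto simp: ends_directed_from_def)

lemma ends_directed_from_append:
  assumes "ends_directed_from x (vs @ tl vs') (ks @ ks')"
    and "length vs = Suc (length ks)" "x \<notin> set vs'"
  shows "directed_walk ks'"
proof -
  obtain i where i: "i < length (vs @ tl vs')" "(vs @ tl vs') ! i = x"
    and Fwd: "\<And>j. i \<le> j \<Longrightarrow> j < length (ks @ ks') \<Longrightarrow> (ks @ ks') ! j = Fwd"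
    using assms(1) unfolding ends_directed_from_def by blast
  have "i \<le> length ks"
  proof (rule ccontr)
    assume "\<not> i \<le> length ks"
    with i assms(2) have "x \<in> set (tl vs')" by (auto simp: nth_append)
    with assms(3) show False by (cases vs') auto
  qed
  then show ?thesis
    using Fwd[of "length ks + _"] by (auto simp: directed_walk_def nth_append)
qed

locale causal_pair =
  fixes V :: "'v set" and D B :: "('v \<times> 'v) set" and x y :: 'v
  assumes admg: "admg V D B" and x_in_V: "x \<in> V"
begin

lemma D_subset: "D \<subseteq> V \<times> V" and acyclic_D: "acyclic D"
  using admg by (auto simp: admg_def)

lemma causal_iff: "c \<in> causal V D B x y \<longleftrightarrow> c \<noteq> x \<and> (x, c) \<in> D\<^sup>* \<and> (c, y) \<in> D\<^sup>*"
  using rtrancl_in_V[OF D_subset _ x_in_V]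
  by (auto simp: causal_def de_iff[OF admg] an_iff[OF admg] x_in_V)

lemma causal_in_V: "c \<in> causal V D B x y \<Longrightarrow> c \<in> V"
  using rtrancl_in_V[OF D_subset _ x_in_V] by (auto simp: causal_iff)

lemma causal_trancl: "c \<in> causal V D B x y \<Longrightarrow> (x, c) \<in> D\<^sup>+"
  by (auto simp: causal_iff rtrancl_eq_or_trancl)

lemma de_causal_iff: "u \<in> de V D B (causal V D B x y) \<longleftrightarrow> (\<exists>c \<in> causal V D B x y. (c, u) \<in> D\<^sup>*)"
  using causal_in_V by (auto simp: de_iff[OF admg])

lemma de_causal_rtrancl:
  "u \<in> de V D B (causal V D B x y) \<Longrightarrow> (u, v) \<in> D\<^sup>* \<Longrightarrow> v \<in> de V D B (causal V D B x y)"
  by (meson de_causal_iff rtrancl_trans)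

lemma x_notin_de_causal: "x \<notin> de V D B (causal V D B x y)"
proof
  assume "x \<in> de V D B (causal V D B x y)"
  then obtain c where "(x, c) \<in> D\<^sup>+" "(c, x) \<in> D\<^sup>*"
    by (auto simp: de_causal_iff dest: causal_trancl)
  then have "(x, x) \<in> D\<^sup>+" by (rule trancl_rtrancl_trancl)
  with acyclic_D show False by (simp add: acyclic_def)
qed

definition open_walks_to_y_end_directed :: "'v set \<Rightarrow> 'v set \<Rightarrow> bool" where
  "open_walks_to_y_end_directed Z W \<longleftrightarrow> (\<forall>vs ks. is_walk V D B vs ks \<longrightarrow> hd vs \<in> Z \<longrightarrow> last vs = y \<longrightarrow>
     open_walk W vs ks \<longrightarrow> ends_directed_from x vs ks)"

lemma open_walks_to_y_end_directedD:
  "open_walks_to_y_end_directed Z W \<Longrightarrow> is_walk V D B vs ks \<Longrightarrow> hd vs \<in> Z \<Longrightarrow> last vs = y \<Longrightarrow>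
    open_walk W vs ks \<Longrightarrow> ends_directed_from x vs ks"
  by (simp add: open_walks_to_y_end_directed_def)

lemma valid_cis_no_W_between:
  assumes "valid_cis V D B x y Z W" "x \<notin> W" "w \<in> W" "(x, w) \<in> D\<^sup>*" "(w, y) \<in> D\<^sup>*"
  shows False
proof -
  have "w \<in> causal V D B x y" using assms(2-5) by (auto simp: causal_iff)
  then have "w \<in> forb V D B x y" by (auto simp: forb_def de_causal_iff)
  with assms(1,3) show False by (auto simp: valid_cis_def)
qed

lemma valid_cis_open_walk_ends_directed:
  assumes valid: "valid_cis V D B x y Z W"
    and walk: "is_walk V D B vs ks" and "hd vs \<in> Z" "last vs = y" and openW: "open_walk W vs ks"
  shows "ends_directed_from x vs ks"
proof (rule ccontr)
  assume not_ends: "\<not> ends_directed_from x vs ks"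
  let ?C = "de V D B (causal V D B x y)"
  have closed: "D `` ?C \<subseteq> ?C" using de_causal_rtrancl by blast
  have C_W: "?C \<inter> W = {}" and C_Z: "?C \<inter> Z = {}" using valid by (auto simp: valid_cis_def forb_def)
  have "is_walk V (D_tilde V D B x y) B vs ks"
    unfolding D_tilde_def
  proof (rule is_walk_Diff[OF walk])
    fix i assume i: "i < length ks" "ks ! i = Fwd"
    show "(vs ! i, vs ! Suc i) \<notin> {(x, c) |c. c \<in> causal V D B x y}"
    proof
      assume "(vs ! i, vs ! Suc i) \<in> {(x, c) |c. c \<in> causal V D B x y}"
      then have "vs ! i = x" "vs ! Suc i \<in> ?C" by (auto simp: de_causal_iff)
      with ends_directed_from_if_Fwd_into_closed[OF walk openW closed C_W i] not_ends
      show False by blast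
    qed
  next
    fix i assume i: "i < length ks" "ks ! i = Bwd"
    show "(vs ! Suc i, vs ! i) \<notin> {(x, c) |c. c \<in> causal V D B x y}"
    proof
      assume "(vs ! Suc i, vs ! i) \<in> {(x, c) |c. c \<in> causal V D B x y}"
      then have "vs ! i \<in> ?C" by (auto simp: de_causal_iff)
      with open_walk_Bwd_propagates[where C = ?C and l = 0, OF walk openW closed C_W i(2) _ _ i(1)]
      have "vs ! 0 \<in> ?C" by simp
      moreover have "vs ! 0 \<in> Z" using \<open>hd vs \<in> Z\<close> is_walk_hd_last[OF walk] by simp
      ultimately show False using C_Z by blast
    qed
  qed
  then have "d_connected V (D_tilde V D B x y) B Z {y} W"
    using assms by (auto simp: d_connected_def)
  with valid show False by (simp add: valid_cis_def d_connected_sym[of V _ B "{y}"])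
qed

lemma not_d_connected_D_tilde:
  assumes "x \<noteq> y"
    and ends: "open_walks_to_y_end_directed Z W"
  shows "\<not> d_connected V (D_tilde V D B x y) B {y} Z W"
proof
  assume "d_connected V (D_tilde V D B x y) B {y} Z W"
  then have "d_connected V (D_tilde V D B x y) B Z {y} W" by (subst d_connected_sym)
  then obtain vs ks where walk: "is_walk V (D_tilde V D B x y) B vs ks"
    and "hd vs \<in> Z" "last vs = y" "open_walk W vs ks"
    by (auto simp: d_connected_def)
  have walk_D: "is_walk V D B vs ks" using is_walk_mono[OF walk] by (auto simp: D_tilde_def)
  obtain i where "i < length vs" "vs ! i = x"
    and Fwd: "\<And>j. i \<le> j \<Longrightarrow> j < length ks \<Longrightarrow> ks ! j = Fwd"
    using open_walks_to_y_end_directedD[OF ends walk_D] \<open>hd vs \<in> Z\<close> \<open>last vs = y\<close> \<open>open_walk W vs ks\<close>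
    unfolding ends_directed_from_def by blast
  moreover have "last vs = vs ! length ks" using is_walk_hd_last[OF walk] by simp
  ultimately have "i < length ks"
    using \<open>last vs = y\<close> \<open>x \<noteq> y\<close> is_walk_length[OF walk] by (cases "i = length ks") auto
  have edge: "(x, vs ! Suc i) \<in> D_tilde V D B x y"
    using is_walk_step_edge[OF walk \<open>i < length ks\<close>] Fwd[of i] \<open>i < length ks\<close> \<open>vs ! i = x\<close>
    by (simp add: step_edge_def)
  have "(vs ! Suc i, y) \<in> D\<^sup>*"
    using Fwd_segment_rtrancl[OF walk_D, of "Suc i" "length ks"] Fwd \<open>i < length ks\<close>
      \<open>last vs = vs ! length ks\<close> \<open>last vs = y\<close> by simp
  moreover have "(x, vs ! Suc i) \<in> D" using edge by (simp add: D_tilde_def)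
  moreover then have "vs ! Suc i \<noteq> x" using acyclic_D by (auto simp: acyclic_def)
  ultimately have "vs ! Suc i \<in> causal V D B x y" by (simp add: causal_iff)
  with edge show False by (simp add: D_tilde_def)
qed

lemma open_walk_Z_to_causalE:
  assumes clear: "\<And>w. w \<in> W \<Longrightarrow> (x, w) \<in> D\<^sup>* \<Longrightarrow> (w, y) \<in> D\<^sup>* \<Longrightarrow> False"
    and "d_connected V D B {x} Z W" "x \<notin> W" "c \<in> causal V D B x y"
  obtains vs ks where "is_walk V D B vs ks" "open_walk W vs ks" "hd vs \<in> Z" "last vs = c"
proof -
  from \<open>d_connected V D B {x} Z W\<close> obtain vs1 ks1 where P1: "is_walk V D B vs1 ks1"
      "hd vs1 \<in> Z" "last vs1 = x" "open_walk W vs1 ks1"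
    by (subst (asm) d_connected_sym) (auto simp: d_connected_def)
  have xc: "(x, c) \<in> D\<^sup>+" and "(c, y) \<in> D\<^sup>*"
    using \<open>c \<in> causal V D B x y\<close> causal_trancl causal_iff by auto
  have "c \<in> V" using assms(4) by (rule causal_in_V)
  have clear_c: "u \<notin> W" if "(x, u) \<in> D\<^sup>+" "(u, c) \<in> D\<^sup>+" for u
    using clear \<open>(c, y) \<in> D\<^sup>*\<close> that by (meson trancl_into_rtrancl rtrancl_trans)
  obtain vs2 ks2 where P2: "is_walk V D B vs2 ks2" "directed_walk ks2" "hd vs2 = x" "last vs2 = c"
      "open_walk W vs2 ks2"
    using open_directed_walkE[OF D_subset trancl_into_rtrancl[OF xc] \<open>c \<in> V\<close> clear_c] .
  have "hd ks2 = Fwd" if "ks2 \<noteq> []" using that directed_walk_hd_last[OF P2(2)] by simp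
  then show ?thesis
    using that[OF is_walk_append[OF P1(1) P2(1)] open_walk_append[OF P1(1) P2(1) _ P1(4) P2(5)]]
      is_walk_append_hd_last[OF P1(1) P2(1)] P1(2,3) P2(3,4) \<open>x \<notin> W\<close> by simp
qed

lemma de_causal_disjoint_W:
  assumes clear: "\<And>w. w \<in> W \<Longrightarrow> (x, w) \<in> D\<^sup>* \<Longrightarrow> (w, y) \<in> D\<^sup>* \<Longrightarrow> False"
    and "d_connected V D B {x} Z W" "x \<notin> W"
    and ends: "open_walks_to_y_end_directed Z W"
  shows "de V D B (causal V D B x y) \<inter> W = {}"
proof (rule ccontr)
  let ?C = "de V D B (causal V D B x y)"
  assume "?C \<inter> W \<noteq> {}"
  then obtain w0 where w0: "w0 \<in> ?C \<inter> W" by blast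
  have "finite D" using admg finite_subset[OF D_subset] by (simp add: admg_def)
  then have "wf (D\<^sup>+)" using acyclic_D by (simp add: finite_acyclic_wf wf_trancl)
  then obtain w where w: "w \<in> ?C \<inter> W" and w_min: "\<And>u. (u, w) \<in> D\<^sup>+ \<Longrightarrow> u \<notin> ?C \<inter> W"
    by (rule wfE_min[OF _ w0]) (rule that)
  obtain c where c: "c \<in> causal V D B x y" "(c, w) \<in> D\<^sup>*" using w de_causal_iff by blast
  have xc: "(x, c) \<in> D\<^sup>+" and cy: "(c, y) \<in> D\<^sup>*" using c(1) causal_trancl by (auto simp: causal_iff)
  have "c \<notin> W" using clear[of c] trancl_into_rtrancl[OF xc] cy by blast
  have clear_w: "u \<notin> W" if "(c, u) \<in> D\<^sup>+" "(u, w) \<in> D\<^sup>+" for u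
    using w_min[OF that(2)] c(1) trancl_into_rtrancl[OF that(1)] de_causal_iff by blast
  have clear_y: "u \<notin> W" if "(c, u) \<in> D\<^sup>+" "(u, y) \<in> D\<^sup>+" for u
    using clear xc that by (meson trancl_into_rtrancl trancl_trans)
  obtain vs2 ks2 where detour: "is_walk V D B vs2 ks2" "open_walk W vs2 ks2" "hd vs2 = c" "last vs2 = y"
      "hd ks2 = Fwd" "Bwd \<in> set ks2" "\<forall>u \<in> set vs2. (c, u) \<in> D\<^sup>*"
    using detour_walkE[OF D_subset causal_in_V[OF c(1)] c(2) cy _ \<open>c \<notin> W\<close> clear_w clear_y] w
    by blast
  obtain vs1 ks1 where P1: "is_walk V D B vs1 ks1" "open_walk W vs1 ks1" "hd vs1 \<in> Z" "last vs1 = c"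
    using open_walk_Z_to_causalE[OF clear assms(2,3) c(1)] .
  have walk: "is_walk V D B (vs1 @ tl vs2) (ks1 @ ks2)"
    and walk_open: "open_walk W (vs1 @ tl vs2) (ks1 @ ks2)"
    using is_walk_append[OF P1(1) detour(1)] open_walk_append[OF P1(1) detour(1) _ P1(2) detour(2)]
      P1 detour \<open>c \<notin> W\<close> by simp_all
  have "hd (vs1 @ tl vs2) \<in> Z" "last (vs1 @ tl vs2) = y"
    using is_walk_append_hd_last[OF P1(1) detour(1)] P1 detour by simp_all
  with open_walks_to_y_end_directedD[OF ends walk] walk_open
  have "ends_directed_from x (vs1 @ tl vs2) (ks1 @ ks2)" by simp
  moreover have "x \<notin> set vs2" using detour(7) c(1) x_notin_de_causal de_causal_iff by blast
  ultimately have "directed_walk ks2"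
    using ends_directed_from_append[OF _ is_walk_length[OF P1(1)]] by simp
  with detour(6) show False by (auto simp: directed_walk_iff)
qed

lemma de_causal_open_walkE:
  assumes "de V D B (causal V D B x y) \<inter> W = {}" "c \<in> de V D B (causal V D B x y)" "(c, u) \<in> D\<^sup>*"
  obtains vs ks where "is_walk V D B vs ks" "directed_walk ks" "hd vs = c" "last vs = u"
    "open_walk W vs ks" "set vs \<subseteq> de V D B (causal V D B x y)"
proof -
  have "c \<in> V" using assms(2) rtrancl_in_V[OF D_subset] by (auto simp: de_iff[OF admg])
  then have "u \<in> V" using rtrancl_in_V[OF D_subset assms(3)] by blast
  have clear: "v \<notin> W" if "(c, v) \<in> D\<^sup>+" "(v, u) \<in> D\<^sup>+" for v
    using assms(1,2) de_causal_rtrancl[OF assms(2) trancl_into_rtrancl[OF that(1)]] by blast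
  obtain vs ks where P: "is_walk V D B vs ks" "directed_walk ks" "hd vs = c" "last vs = u"
      "open_walk W vs ks"
    using open_directed_walkE[OF D_subset assms(3) \<open>u \<in> V\<close> clear] .
  moreover have "set vs \<subseteq> de V D B (causal V D B x y)"
    using directed_walk_set[OF P(1,2)] P(3) de_causal_rtrancl[OF assms(2)] by blast
  ultimately show ?thesis using that by blast
qed

lemma de_causal_disjoint_Z:
  assumes C_W: "de V D B (causal V D B x y) \<inter> W = {}"
    and ends: "open_walks_to_y_end_directed Z W"
  shows "de V D B (causal V D B x y) \<inter> Z = {}"
proof (rule ccontr)
  let ?C = "de V D B (causal V D B x y)"
  assume "?C \<inter> Z \<noteq> {}"
  then obtain z where "z \<in> Z" "z \<in> ?C" by blast
  then obtain c where c: "c \<in> causal V D B x y" "(c, z) \<in> D\<^sup>*" using de_causal_iff by blast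
  have "c \<in> ?C" using c(1) de_causal_iff by blast
  have "(c, y) \<in> D\<^sup>*" using c(1) causal_iff by blast
  obtain vs1 ks1 where P1: "is_walk V D B vs1 ks1" "directed_walk ks1" "hd vs1 = c" "last vs1 = z"
      "open_walk W vs1 ks1" "set vs1 \<subseteq> ?C"
    using de_causal_open_walkE[OF C_W \<open>c \<in> ?C\<close> c(2)] .
  obtain vs2 ks2 where P2: "is_walk V D B vs2 ks2" "directed_walk ks2" "hd vs2 = c" "last vs2 = y"
      "open_walk W vs2 ks2" "set vs2 \<subseteq> ?C"
    using de_causal_open_walkE[OF C_W \<open>c \<in> ?C\<close> \<open>(c, y) \<in> D\<^sup>*\<close>] .
  have walk: "is_walk V D B (rev vs1 @ tl vs2) (rev (map flip ks1) @ ks2)"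
    and walk_open: "open_walk W (rev vs1 @ tl vs2) (rev (map flip ks1) @ ks2)"
    using fork_walk[OF P1(1,2,5) P2(1,5)] P1(3) P2(3) \<open>c \<in> ?C\<close> C_W by auto
  have "hd (rev vs1 @ tl vs2) \<in> Z" "last (rev vs1 @ tl vs2) = y"
    using is_walk_append_hd_last[OF is_walk_rev[OF P1(1)] P2(1)] P1(3,4) P2(3,4) \<open>z \<in> Z\<close>
      is_walk_not_Nil[OF P1(1)]
    by (simp_all add: hd_rev last_rev)
  with open_walks_to_y_end_directedD[OF ends walk] walk_open
  have "ends_directed_from x (rev vs1 @ tl vs2) (rev (map flip ks1) @ ks2)" by simp
  then have "x \<in> set (rev vs1 @ tl vs2)" by (rule ends_directed_from_mem)
  moreover have "set (rev vs1 @ tl vs2) \<subseteq> ?C"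
    using set_append_tl_subset[of "rev vs1" vs2] P1(6) P2(6) by auto
  ultimately show False using x_notin_de_causal by blast
qed

end

theorem mainTheorem2:
  fixes V :: "'v set" and D B :: "('v \<times> 'v) set" and x y :: 'v and Z W :: "'v set"
  assumes "admg V D B"
    and "x \<in> V" and "y \<in> V" and "x \<noteq> y"
    and "Z \<subseteq> V" and "W \<subseteq> V"
    and "x \<notin> Z" and "y \<notin> Z" and "x \<notin> W" and "y \<notin> W" and "Z \<inter> W = {}"
  shows "valid_cis V D B x y Z W \<longleftrightarrow>
     (\<not> (\<exists>vs ks. dir_path V D B vs ks \<and> hd vs = x \<and> last vs = y \<and> set vs \<inter> W \<noteq> {})) \<and>
     (\<exists>vs ks. is_walk V D B vs ks \<and> hd vs \<in> Z \<and> last vs = x \<and> open_walk W vs ks) \<and>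
     (\<not> (\<exists>vs ks. is_walk V D B vs ks \<and> hd vs \<in> Z \<and> last vs = y \<and> open_walk W vs ks
              \<and> \<not> ends_directed_from x vs ks))"
proof -
  \<comment> \<open>Of the hypotheses, only \<open>admg V D B\<close>, \<open>x \<in> V\<close>, \<open>x \<noteq> y\<close>, \<open>x \<notin> Z\<close> and \<open>x \<notin> W\<close> are needed.\<close>
  interpret causal_pair V D B x y using assms(1,2) by unfold_locales
  have cond_i: "(\<not> (\<exists>vs ks. dir_path V D B vs ks \<and> hd vs = x \<and> last vs = y \<and> set vs \<inter> W \<noteq> {})) \<longleftrightarrow>
      (\<forall>w \<in> W. \<not> ((x, w) \<in> D\<^sup>* \<and> (w, y) \<in> D\<^sup>*))" (is "?i \<longleftrightarrow> _")
    unfolding dir_path_through_iff[OF assms(1)] using assms(2) by blast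
  have cond_ii: "(\<exists>vs ks. is_walk V D B vs ks \<and> hd vs \<in> Z \<and> last vs = x \<and> open_walk W vs ks) \<longleftrightarrow>
      d_connected V D B {x} Z W" (is "?ii \<longleftrightarrow> _")
    by (subst d_connected_sym) (auto simp: d_connected_def)
  have cond_iii: "(\<not> (\<exists>vs ks. is_walk V D B vs ks \<and> hd vs \<in> Z \<and> last vs = y \<and> open_walk W vs ks
      \<and> \<not> ends_directed_from x vs ks)) \<longleftrightarrow> open_walks_to_y_end_directed Z W" (is "?iii \<longleftrightarrow> _")
    by (auto simp: open_walks_to_y_end_directed_def)
  show ?thesis
  proof
    assume valid: "valid_cis V D B x y Z W"
    have ?i using cond_i valid_cis_no_W_between[OF valid assms(9)] by blast
    moreover have ?ii using cond_ii valid by (simp add: valid_cis_def)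
    moreover have ?iii using valid_cis_open_walk_ends_directed[OF valid] by blast
    ultimately show "?i \<and> ?ii \<and> ?iii" by blast
  next
    assume "?i \<and> ?ii \<and> ?iii"
    then have clear: "\<And>w. w \<in> W \<Longrightarrow> (x, w) \<in> D\<^sup>* \<Longrightarrow> (w, y) \<in> D\<^sup>* \<Longrightarrow> False"
      and connected: "d_connected V D B {x} Z W" and ends: "open_walks_to_y_end_directed Z W"
      using cond_i cond_ii cond_iii by blast+
    have C_W: "de V D B (causal V D B x y) \<inter> W = {}"
      using de_causal_disjoint_W[OF clear connected assms(9) ends] .
    have "de V D B (causal V D B x y) \<inter> Z = {}"
      using de_causal_disjoint_Z[OF C_W ends] .
    with C_W show "valid_cis V D B x y Z W"
      using connected not_d_connected_D_tilde[OF assms(4) ends] assms(7,9)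
      by (auto simp: valid_cis_def forb_def)
  qed
qed

end
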